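(* Let $(X\cup Y,\mathbf{d})$ be a finite metric space with opening costs $\mathrm{open}(f)>0$ for $f\in Y$, let $\epsilon \in (0,\frac 12 )$ and let $S\subseteq Y$ be a $c$-approximation to the facility location problem on this instance. For each $x\in X$ let $N_x$ be an $\epsilon \cdot \mathbf{d}(x, S)$-net of $B_Y(\pi_S(x), \mathbf{d}(x,S)/\epsilon)$ and define $\widehat{\mathbf{d}}_S(x,y) = \min_{u\in N_x} \mathbf{d}(x,u) + \mathbf{d}(u,y)$ for $y\in Y$. Then for any set $F\subseteq Y$, \[ \widehat{\mathbf{d}}_S(X,F) + \sum_{f\in F} \mathrm{open}(f) \le (1+6c \epsilon) \cdot \mathrm{fl}(X,F), \] where $\widehat{\mathbf{d}}_S(X,F)=\sum_{x\in X}\min_{y\in F}\widehat{\mathbf{d}}_S(x,y)$ and $\mathrm{fl}(X,F)=\sum_{x\in X}\mathbf{d}(x,F)+\sum_{f\in F}\mathrm{open}(f)$.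
   Context: Facility location: find $F\subseteq Y$ minimizing $\mathrm{fl}(X,F)$; $S$ is a $c$-approximation if $\mathrm{fl}(X,S)\le c\cdot\min_{F\subseteq Y}\mathrm{fl}(X,F)$. $B_Y(x,r)=\{y\in Y:\mathbf{d}(x,y)\le r\}$; $\pi_S(x)$ is a point of $S$ closest to $x$, $\mathbf{d}(x,S)=\mathbf{d}(x,\pi_S(x))$, $\mathbf{d}(x,F)=\min_{f\in F}\mathbf{d}(x,f)$. A $\rho$-net of $B$ is a subset $N\subseteq B$ whose distinct points are pairwise at distance $\ge\rho$ and such that every point of $B$ is within distance $\rho$ of some point of $N$. *)

theory Defs
  imports "HOL-Analysis.Analysis"
begin

definition dist_set :: "('a \<Rightarrow> 'a \<Rightarrow> real) \<Rightarrow> 'a \<Rightarrow> 'a set \<Rightarrow> real" where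
  "dist_set d x F = Min ((d x) ` F)"

definition fl :: "('a \<Rightarrow> 'a \<Rightarrow> real) \<Rightarrow> ('a \<Rightarrow> real) \<Rightarrow> 'a set \<Rightarrow> 'a set \<Rightarrow> real" where
  "fl d opn X F = (\<Sum>x\<in>X. dist_set d x F) + (\<Sum>f\<in>F. opn f)"

text \<open>S is a c-approximation: fl(X,S) is at most c times the optimum over facility sets
  (the empty facility set has infinite cost whenever X is nonempty, so it is excluded).\<close>
definition c_approx :: "('a \<Rightarrow> 'a \<Rightarrow> real) \<Rightarrow> ('a \<Rightarrow> real) \<Rightarrow> 'a set \<Rightarrow> 'a set \<Rightarrow> real \<Rightarrow> 'a set \<Rightarrow> bool" where
  "c_approx d opn X Y c S \<longleftrightarrow> S \<subseteq> Y \<and> S \<noteq> {} \<and>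
     (\<forall>F. F \<subseteq> Y \<and> F \<noteq> {} \<longrightarrow> fl d opn X S \<le> c * fl d opn X F)"

definition ballY :: "('a \<Rightarrow> 'a \<Rightarrow> real) \<Rightarrow> 'a set \<Rightarrow> 'a \<Rightarrow> real \<Rightarrow> 'a set" where
  "ballY d Y x r = {y \<in> Y. d x y \<le> r}"

definition is_net :: "('a \<Rightarrow> 'a \<Rightarrow> real) \<Rightarrow> real \<Rightarrow> 'a set \<Rightarrow> 'a set \<Rightarrow> bool" where
  "is_net d \<rho> B N \<longleftrightarrow> N \<subseteq> B \<and> (\<forall>u\<in>N. \<forall>v\<in>N. u \<noteq> v \<longrightarrow> \<rho> \<le> d u v) \<and>
     (\<forall>b\<in>B. \<exists>u\<in>N. d b u \<le> \<rho>)"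

definition dhat :: "('a \<Rightarrow> 'a \<Rightarrow> real) \<Rightarrow> ('a \<Rightarrow> 'a set) \<Rightarrow> 'a \<Rightarrow> 'a \<Rightarrow> real" where
  "dhat d N x y = Min ((\<lambda>u. d x u + d u y) ` N x)"

end

theory Submission
  imports Defs
begin

text \<open>
  Fix a client \<open>x\<close> with \<open>D = d(x,S)\<close>, and let \<open>f\<close> be its nearest facility in \<open>F\<close>, \<open>r = d(x,f)\<close>.
  If \<open>f\<close> lies in the ball \<open>B\<^sub>Y(\<pi>\<^sub>S(x), D/\<epsilon>)\<close>, the net point \<open>u\<close> next to \<open>f\<close> gives a detour
  \<open>x \<rightarrow> u \<rightarrow> f\<close> of length at most \<open>r + 2\<epsilon>D\<close>. Otherwise \<open>f\<close> is so far from \<open>\<pi>\<^sub>S(x)\<close> that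
  \<open>D \<le> 2\<epsilon>r\<close>, and the net point next to \<open>\<pi>\<^sub>S(x)\<close> gives a detour of length at most
  \<open>r + 2D + 2\<epsilon>D \<le> r + 2\<epsilon>D + 4\<epsilon>r\<close>. Summing over the clients, the extra cost is
  \<open>2\<epsilon>\<Sum>d(x,S) + 4\<epsilon>\<Sum>d(x,F)\<close>, and both sums are at most \<open>c\<cdot>fl(X,F)\<close> because \<open>S\<close> is a
  \<open>c\<close>-approximation (which forces \<open>c \<ge> 1\<close>).
\<close>

lemma dist_set_attained:
  assumes "finite F" "F \<noteq> {}"
  obtains f where "f \<in> F" "dist_set d x F = d x f"
proof -
  have "Min (d x ` F) \<in> d x ` F" using assms by simp
  then show ?thesis using that unfolding dist_set_def by blast
qed

lemma dhat_le:
  assumes "finite (N x)" "u \<in> N x"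
  shows "dhat d N x y \<le> d x u + d u y"
  unfolding dhat_def using assms by simp

context Metric_space
begin

lemma dist_set_nonneg:
  assumes "finite A" "A \<noteq> {}"
  shows "0 \<le> dist_set d x A"
  by (metis assms dist_set_attained nonneg)

lemma fl_nonneg:
  assumes "finite F" "F \<noteq> {}" "\<forall>f\<in>F. 0 \<le> opn f"
  shows "0 \<le> fl d opn X F"
  unfolding fl_def using assms dist_set_nonneg by (simp add: sum_nonneg)

lemma detour_le_via_start:
  assumes "x \<in> M" "u \<in> M" "f \<in> M"
  shows "d x u + d u f \<le> d x f + 2 * d x u"
  using triangle[of u x f] commute[of u x] assms by simp

lemma detour_le_via_end:
  assumes "x \<in> M" "u \<in> M" "f \<in> M"
  shows "d x u + d u f \<le> d x f + 2 * d u f"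
  using triangle[of x f u] commute[of f u] assms by simp

lemma far_target_bounds_center_dist:
  assumes "x \<in> M" "s \<in> M" "f \<in> M" "0 < \<epsilon>" "\<epsilon> \<le> 1/2"
    and far: "d x s / \<epsilon> < d s f"
  shows "d x s \<le> 2 * \<epsilon> * d x f"
proof -
  have "d x s < \<epsilon> * d s f"
    using far \<open>0 < \<epsilon>\<close> by (simp add: divide_less_eq mult.commute)
  also have "\<dots> \<le> \<epsilon> * (d x s + d x f)"
    using triangle[of s x f] commute[of s x] assms(1-4) by (intro mult_left_mono) auto
  finally have "d x s < \<epsilon> * (d x s + d x f)" .
  then have "(1 - \<epsilon>) * d x s < \<epsilon> * d x f"
    by (simp add: algebra_simps)
  moreover have "1/2 * d x s \<le> (1 - \<epsilon>) * d x s"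
    using \<open>\<epsilon> \<le> 1/2\<close> by (intro mult_right_mono) auto
  ultimately show ?thesis by linarith
qed

lemma net_detour_le:
  assumes "Y \<subseteq> M" "x \<in> M" "s \<in> Y" "f \<in> Y" "d x s = D" "0 < \<epsilon>" "\<epsilon> \<le> 1/2"
    and net: "is_net d (\<epsilon> * D) (ballY d Y s (D / \<epsilon>)) N"
  shows "\<exists>u\<in>N. d x u + d u f \<le> d x f + 2 * \<epsilon> * D + 4 * \<epsilon> * d x f"
proof -
  have "N \<subseteq> M" "s \<in> M" "f \<in> M"
    using net assms(1,3,4) unfolding is_net_def ballY_def by auto
  have "0 \<le> D" "0 \<le> \<epsilon> * D" "0 \<le> \<epsilon> * d x f"
    using \<open>d x s = D\<close> \<open>0 < \<epsilon>\<close> by auto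
  show ?thesis
  proof (cases "d s f \<le> D / \<epsilon>")
    case True
    then have "f \<in> ballY d Y s (D / \<epsilon>)" unfolding ballY_def using \<open>f \<in> Y\<close> by simp
    then obtain u where "u \<in> N" and u: "d f u \<le> \<epsilon> * D" using net unfolding is_net_def by blast
    then have "d x u + d u f \<le> d x f + 2 * d u f"
      using detour_le_via_end \<open>N \<subseteq> M\<close> \<open>x \<in> M\<close> \<open>f \<in> M\<close> by blast
    then have "d x u + d u f \<le> d x f + 2 * \<epsilon> * D + 4 * \<epsilon> * d x f"
      using u commute[of f u] \<open>0 \<le> \<epsilon> * d x f\<close> by linarith
    with \<open>u \<in> N\<close> show ?thesis by blast
  next
    case False
    then have D_le: "D \<le> 2 * \<epsilon> * d x f"
      using far_target_bounds_center_dist \<open>s \<in> M\<close> \<open>f \<in> M\<close> assms(2,5-7) by force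
    have "s \<in> ballY d Y s (D / \<epsilon>)"
      unfolding ballY_def using \<open>s \<in> Y\<close> \<open>s \<in> M\<close> \<open>0 \<le> D\<close> \<open>0 < \<epsilon>\<close> by simp
    then obtain u where "u \<in> N" and u: "d s u \<le> \<epsilon> * D" using net unfolding is_net_def by blast
    then have "u \<in> M" using \<open>N \<subseteq> M\<close> by blast
    then have "d x u \<le> D + \<epsilon> * D"
      using triangle[of x s u] u \<open>x \<in> M\<close> \<open>s \<in> M\<close> \<open>d x s = D\<close> by linarith
    moreover have "d x u + d u f \<le> d x f + 2 * d x u"
      using detour_le_via_start \<open>u \<in> M\<close> \<open>x \<in> M\<close> \<open>f \<in> M\<close> by blast
    ultimately have "d x u + d u f \<le> d x f + 2 * \<epsilon> * D + 4 * \<epsilon> * d x f"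
      using D_le by linarith
    with \<open>u \<in> N\<close> show ?thesis by blast
  qed
qed

lemma Min_dhat_le:
  assumes "finite Y" "Y \<subseteq> M" "x \<in> M" "s \<in> Y" "d x s = D" "0 < \<epsilon>" "\<epsilon> \<le> 1/2"
    and "is_net d (\<epsilon> * D) (ballY d Y s (D / \<epsilon>)) (N x)"
    and "F \<subseteq> Y" "F \<noteq> {}"
  shows "Min (dhat d N x ` F) \<le> dist_set d x F + 2 * \<epsilon> * D + 4 * \<epsilon> * dist_set d x F"
proof -
  have "finite F" "finite (N x)"
    using assms unfolding is_net_def ballY_def by (auto intro: finite_subset)
  obtain f where "f \<in> F" and f: "dist_set d x F = d x f"
    using dist_set_attained \<open>finite F\<close> \<open>F \<noteq> {}\<close> by metis
  obtain u where "u \<in> N x" and u: "d x u + d u f \<le> d x f + 2 * \<epsilon> * D + 4 * \<epsilon> * d x f"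
    using net_detour_le[of Y x s f D \<epsilon> "N x"] assms \<open>f \<in> F\<close> by auto
  have "Min (dhat d N x ` F) \<le> dhat d N x f" using \<open>finite F\<close> \<open>f \<in> F\<close> by simp
  also have "\<dots> \<le> d x u + d u f" using dhat_le \<open>finite (N x)\<close> \<open>u \<in> N x\<close> .
  finally show ?thesis using u unfolding f by linarith
qed

lemma sum_Min_dhat_le:
  assumes "finite Y" "X \<subseteq> M" "Y \<subseteq> M" "0 < \<epsilon>" "\<epsilon> \<le> 1/2"
    and "\<forall>x\<in>X. p x \<in> Y \<and> d x (p x) = D x"
    and "\<forall>x\<in>X. is_net d (\<epsilon> * D x) (ballY d Y (p x) (D x / \<epsilon>)) (N x)"
    and "F \<subseteq> Y" "F \<noteq> {}"
  shows "(\<Sum>x\<in>X. Min (dhat d N x ` F))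
    \<le> (\<Sum>x\<in>X. dist_set d x F) + 2 * \<epsilon> * (\<Sum>x\<in>X. D x) + 4 * \<epsilon> * (\<Sum>x\<in>X. dist_set d x F)"
proof -
  have "Min (dhat d N x ` F) \<le> dist_set d x F + 2 * \<epsilon> * D x + 4 * \<epsilon> * dist_set d x F"
    if "x \<in> X" for x
    using Min_dhat_le[of Y x "p x" "D x" \<epsilon> N F] assms that by auto
  then have "(\<Sum>x\<in>X. Min (dhat d N x ` F))
      \<le> (\<Sum>x\<in>X. dist_set d x F + 2 * \<epsilon> * D x + 4 * \<epsilon> * dist_set d x F)"
    by (rule sum_mono)
  also have "\<dots> = (\<Sum>x\<in>X. dist_set d x F) + 2 * \<epsilon> * (\<Sum>x\<in>X. D x) + 4 * \<epsilon> * (\<Sum>x\<in>X. dist_set d x F)"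
    by (simp add: sum.distrib sum_distrib_left)
  finally show ?thesis .
qed

lemma c_approx_ge_one:
  assumes "finite Y" "\<forall>f\<in>Y. 0 < opn f" "c_approx d opn X Y c S"
  shows "1 \<le> c"
proof -
  have "S \<subseteq> Y" "S \<noteq> {}" and S_le: "fl d opn X S \<le> c * fl d opn X S"
    using assms(3) unfolding c_approx_def by auto
  then have "finite S" using \<open>finite Y\<close> finite_subset by blast
  have "0 < (\<Sum>f\<in>S. opn f)"
    using \<open>finite S\<close> \<open>S \<noteq> {}\<close> \<open>S \<subseteq> Y\<close> assms(2) by (intro sum_pos) auto
  moreover have "0 \<le> (\<Sum>x\<in>X. dist_set d x S)"
    using dist_set_nonneg \<open>finite S\<close> \<open>S \<noteq> {}\<close> by (simp add: sum_nonneg)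
  ultimately have "0 < fl d opn X S" unfolding fl_def by linarith
  with S_le show ?thesis by simp
qed

end

lemma c_approx_connection_cost_le:
  assumes "c_approx d opn X Y c S" "\<forall>f\<in>Y. 0 \<le> opn f" "F \<subseteq> Y" "F \<noteq> {}"
  shows "(\<Sum>x\<in>X. dist_set d x S) \<le> c * fl d opn X F"
proof -
  have "S \<subseteq> Y" using assms(1) unfolding c_approx_def by blast
  then have "(\<Sum>x\<in>X. dist_set d x S) \<le> fl d opn X S"
    unfolding fl_def using assms(2) by (simp add: subset_iff sum_nonneg)
  also have "\<dots> \<le> c * fl d opn X F" using assms(1,3,4) unfolding c_approx_def by blast
  finally show ?thesis .
qed

theorem corollary3p3:
  fixes d :: "'a \<Rightarrow> 'a \<Rightarrow> real" and X Y S F :: "'a set" and opn :: "'a \<Rightarrow> real"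
    and \<epsilon> c :: real and p :: "'a \<Rightarrow> 'a" and N :: "'a \<Rightarrow> 'a set"
  assumes "finite X" and "finite Y"
    and "Metric_space (X \<union> Y) d"
    and "\<forall>f\<in>Y. opn f > 0"
    and "0 < \<epsilon>" and "\<epsilon> < 1/2"
    and "c_approx d opn X Y c S"
    and "\<forall>x\<in>X. p x \<in> S \<and> d x (p x) = dist_set d x S"
    and "\<forall>x\<in>X. is_net d (\<epsilon> * dist_set d x S) (ballY d Y (p x) (dist_set d x S / \<epsilon>)) (N x)"
    and "F \<subseteq> Y" and "F \<noteq> {}"
  shows "(\<Sum>x\<in>X. Min ((dhat d N x) ` F)) + (\<Sum>f\<in>F. opn f) \<le> (1 + 6 * c * \<epsilon>) * fl d opn X F"
proof -
  interpret Metric_space "X \<union> Y" d by fact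
  let ?DS = "\<Sum>x\<in>X. dist_set d x S" and ?DF = "\<Sum>x\<in>X. dist_set d x F" and ?fl = "fl d opn X F"
  have "S \<subseteq> Y" "finite F" using assms(2,7,10) finite_subset unfolding c_approx_def by auto
  have opn_nonneg: "\<forall>f\<in>Y. 0 \<le> opn f" using assms(4) by (simp add: less_imp_le)
  have detour: "(\<Sum>x\<in>X. Min (dhat d N x ` F)) \<le> ?DF + 2 * \<epsilon> * ?DS + 4 * \<epsilon> * ?DF"
    using sum_Min_dhat_le[of Y X \<epsilon> p "\<lambda>x. dist_set d x S" N F] assms(2,5,6,8-11) \<open>S \<subseteq> Y\<close> by auto
  have fl_eq: "?fl = ?DF + (\<Sum>f\<in>F. opn f)" by (simp add: fl_def)
  have "0 \<le> (\<Sum>f\<in>F. opn f)" "0 \<le> ?fl"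
    using opn_nonneg assms(10) fl_nonneg[OF \<open>finite F\<close> assms(11)] by (auto simp: subset_iff sum_nonneg)
  moreover have "1 \<le> c" using c_approx_ge_one assms(2,4,7) by blast
  ultimately have "?DF \<le> c * ?fl" using fl_eq mult_right_mono[of 1 c ?fl] by linarith
  moreover have "?DS \<le> c * ?fl" using c_approx_connection_cost_le assms(7,10,11) opn_nonneg by blast
  ultimately have "4 * \<epsilon> * ?DF \<le> 4 * \<epsilon> * (c * ?fl)" "2 * \<epsilon> * ?DS \<le> 2 * \<epsilon> * (c * ?fl)"
    using \<open>0 < \<epsilon>\<close> by simp_all
  moreover have "(1 + 6 * c * \<epsilon>) * ?fl = ?fl + 2 * \<epsilon> * (c * ?fl) + 4 * \<epsilon> * (c * ?fl)"
    by (simp add: algebra_simps)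
  ultimately show ?thesis using detour fl_eq by linarith
qed

end
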